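(* The morphism $\tau$ restricts to an isomorphism $\tau:U_\tau\xrightarrow{\sim}U_\rho$, one has $U_\rho\subseteq\bar M\setminus T_\rho$, and $\rho$ restricts to an isomorphism $\rho:U_\rho\xrightarrow{\sim}U_\tau$ with $\tau|_{U_\tau}=(\rho|_{U_\rho})^{-1}$.
   Context: Work over $\mathbb Q$. Let $\sigma_k$ be the $k$-th elementary symmetric polynomial in $x_0,\dots,x_4$ and $\bar M\subset\mathbb P^4$ the surface $\sigma_2=\sigma_4=0$. Let $t_0=(y-z)(xy+xz-z^2)$, $t_1=xz^2+yz^2-x^2y-z^3$, $t_2=x(z^2-y^2-xz)$, $t_3=z(yz-xz+x^2-y^2)$, $\tau_i=-(\prod_{j\in\{0,..,3\},j\neq i}t_j)(\sum_{j=0}^3t_j)$ ($i\le3$), $\tau_4=\prod_{j=0}^3t_j$, $T_\tau=\bigcap_iV_+(\tau_i)\subset\mathbb P^2$ (finite); $\tau=(\tau_0:\dots:\tau_4)$ defines a morphism $\mathbb P^2\setminus T_\tau\to\bar M$ (its scheme-theoretic image is $\bar M$). With $r_i=\prod_{j\in\{0,..,4\},j\neq i}x_j$, set $\rho_0=-(r_1+r_3)(r_0+r_1+r_2)$, $\rho_1=r_0(r_0+r_1+r_2+r_3)$, $\rho_2=r_0(r_0+r_2)$, $T_\rho=\bar M\cap\bigcap_{i}V_+(\rho_i)$, and $\rho=(\rho_0:\rho_1:\rho_2):\bar M\setminus T_\rho\to\mathbb P^2$. Let $\lambda=\rho_0(\tau_0,\dots,\tau_4)/x\in\mathbb Z[x,y,z]$,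 $C_\tau=V_+(\lambda)$, $U_\tau=\mathbb P^2\setminus C_\tau$ and $U_\rho=\tau(U_\tau)\subset\bar M$. *)

theory Defs
  imports Main "HOL-Library.Poly_Mapping"
begin

definition t0 :: "'a::comm_ring_1 \<Rightarrow> 'a \<Rightarrow> 'a \<Rightarrow> 'a" where
  "t0 x y z = (y - z) * (x*y + x*z - z^2)"
definition t1 :: "'a::comm_ring_1 \<Rightarrow> 'a \<Rightarrow> 'a \<Rightarrow> 'a" where
  "t1 x y z = x*z^2 + y*z^2 - x^2*y - z^3"
definition t2 :: "'a::comm_ring_1 \<Rightarrow> 'a \<Rightarrow> 'a \<Rightarrow> 'a" where
  "t2 x y z = x * (z^2 - y^2 - x*z)"
definition t3 :: "'a::comm_ring_1 \<Rightarrow> 'a \<Rightarrow> 'a \<Rightarrow> 'a" where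
  "t3 x y z = z * (y*z - x*z + x^2 - y^2)"

definition tt :: "nat \<Rightarrow> 'a::comm_ring_1 \<Rightarrow> 'a \<Rightarrow> 'a \<Rightarrow> 'a" where
  "tt j x y z = (if j = 0 then t0 x y z else if j = 1 then t1 x y z
                 else if j = 2 then t2 x y z else t3 x y z)"

text \<open>The five coordinates tau_0..tau_4 (entries with index >= 5 are 0 and never used).\<close>
definition tau :: "'a::comm_ring_1 \<Rightarrow> 'a \<Rightarrow> 'a \<Rightarrow> nat \<Rightarrow> 'a" where
  "tau x y z i =
     (if i < 4 then - (\<Prod>j\<in>{0..3} - {i}. tt j x y z) * (\<Sum>j\<in>{0..3}. tt j x y z)
      else if i = 4 then (\<Prod>j\<in>{0..3}. tt j x y z) else 0)"

definition esym :: "nat \<Rightarrow> (nat \<Rightarrow> 'a::comm_ring_1) \<Rightarrow> 'a" where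
  "esym k v = (\<Sum>S\<in>{S. S \<subseteq> {0..<5} \<and> card S = k}. \<Prod>i\<in>S. v i)"

definition rr :: "nat \<Rightarrow> (nat \<Rightarrow> 'a::comm_ring_1) \<Rightarrow> 'a" where
  "rr i v = (\<Prod>j\<in>{0..<5} - {i}. v j)"

definition rho0 :: "(nat \<Rightarrow> 'a::comm_ring_1) \<Rightarrow> 'a" where
  "rho0 v = - (rr 1 v + rr 3 v) * (rr 0 v + rr 1 v + rr 2 v)"
definition rho1 :: "(nat \<Rightarrow> 'a::comm_ring_1) \<Rightarrow> 'a" where
  "rho1 v = rr 0 v * (rr 0 v + rr 1 v + rr 2 v + rr 3 v)"
definition rho2 :: "(nat \<Rightarrow> 'a::comm_ring_1) \<Rightarrow> 'a" where
  "rho2 v = rr 0 v * (rr 0 v + rr 2 v)"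

type_synonym zpoly = "(nat \<Rightarrow>\<^sub>0 nat) \<Rightarrow>\<^sub>0 int"

definition Var :: "nat \<Rightarrow> zpoly" where
  "Var i = Poly_Mapping.single (Poly_Mapping.single i 1) 1"

definition lambda_poly :: zpoly where
  "lambda_poly = (THE q. Var 0 * q = rho0 (tau (Var 0) (Var 1) (Var 2)))"

definition peval :: "zpoly \<Rightarrow> 'a::comm_ring_1 \<times> 'a \<times> 'a \<Rightarrow> 'a" where
  "peval p P = (case P of (x, y, z) \<Rightarrow>
     (\<Sum>m\<in>Poly_Mapping.keys p. of_int (Poly_Mapping.lookup p m) *
        x ^ Poly_Mapping.lookup m 0 * y ^ Poly_Mapping.lookup m 1 * z ^ Poly_Mapping.lookup m 2))"

text \<open>Points of P^2 are nonzero triples, points of P^4 nonzero vectors (indices 0..4);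
  equality of projective points is proportionality.\<close>

definition P2 :: "('a::field \<times> 'a \<times> 'a) set" where
  "P2 = {p. p \<noteq> (0, 0, 0)}"

definition proj2_eq :: "'a::field \<times> 'a \<times> 'a \<Rightarrow> 'a \<times> 'a \<times> 'a \<Rightarrow> bool" where
  "proj2_eq p q = (case p of (x, y, z) \<Rightarrow> p \<noteq> (0, 0, 0) \<and>
      (\<exists>c. c \<noteq> 0 \<and> q = (c * x, c * y, c * z)))"

definition proj4_eq :: "(nat \<Rightarrow> 'a::field) \<Rightarrow> (nat \<Rightarrow> 'a) \<Rightarrow> bool" where
  "proj4_eq v w = ((\<exists>i<5. v i \<noteq> 0) \<and> (\<exists>c. c \<noteq> 0 \<and> (\<forall>i<5. w i = c * v i)))"

definition tau_pt :: "'a::field \<times> 'a \<times> 'a \<Rightarrow> nat \<Rightarrow> 'a" where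
  "tau_pt P = (case P of (x, y, z) \<Rightarrow> tau x y z)"

definition rho_pt :: "(nat \<Rightarrow> 'a::field) \<Rightarrow> 'a \<times> 'a \<times> 'a" where
  "rho_pt v = (rho0 v, rho1 v, rho2 v)"

definition Mbar :: "(nat \<Rightarrow> 'a::field) set" where
  "Mbar = {v. (\<exists>i<5. v i \<noteq> 0) \<and> esym 2 v = 0 \<and> esym 4 v = 0}"

definition T_tau :: "('a::field \<times> 'a \<times> 'a) set" where
  "T_tau = {p \<in> P2. \<forall>i<5. tau_pt p i = 0}"

definition T_rho :: "(nat \<Rightarrow> 'a::field) set" where
  "T_rho = {v \<in> Mbar. rho0 v = 0 \<and> rho1 v = 0 \<and> rho2 v = 0}"

definition C_tau :: "('a::field \<times> 'a \<times> 'a) set" where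
  "C_tau = {p \<in> P2. peval lambda_poly p = 0}"

definition U_tau :: "('a::field \<times> 'a \<times> 'a) set" where
  "U_tau = P2 - C_tau"

text \<open>U_rho = tau(U_tau), as the set of all representatives of image points.\<close>
definition U_rho :: "(nat \<Rightarrow> 'a::field) set" where
  "U_rho = {v. \<exists>p\<in>U_tau. proj4_eq (tau_pt p) v}"

end

theory Submission
  imports Defs
begin

(* Write S and P for the sum and the product of t_0, ..., t_3.  Then tau_4 = P and, for
   i < 4, tau_i is -S times the product of the other three t_j, so every r_i(tau) equals
   -S^3 P^3 t_i, and the quadrics defining rho collapse to the polynomial identity
   rho(tau(x:y:z)) = lambda(x,y,z) (x, y, z) with lambda = (S P)^6 g for a quintic g.
   Since tau, rho and lambda are homogeneous (of degrees 12, 8 and 95), this identity passes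
   to projective points: off C_tau, rho inverts tau, so tau is injective there and rho maps
   U_rho back into U_tau.  The image of tau lies in Mbar because
   sigma_4(tau) = S^3 P^3 (S - sigma_1(t)) vanishes identically, while
   sigma_2(tau) = S P (S sigma_2(t) - sigma_3(t)) vanishes by a relation satisfied by the t_i. *)

section \<open>Vectors of the shape of tau\<close>

definition tau_gen :: "(nat \<Rightarrow> 'a::comm_ring_1) \<Rightarrow> nat \<Rightarrow> 'a" where
  "tau_gen t i =
     (if i < 4 then - (\<Prod>j\<in>{0..3} - {i}. t j) * (\<Sum>j\<in>{0..3}. t j)
      else if i = 4 then (\<Prod>j\<in>{0..3}. t j) else 0)"

lemma tau_eq_tau_gen: "tau x y z = tau_gen (\<lambda>j. tt j x y z)"
  by (simp add: fun_eq_iff tau_def tau_gen_def)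

lemma atLeastAtMost_0_3: "{0..3::nat} = {0, 1, 2, 3}"
  by auto

lemma atLeastLessThan_0_5: "{0..<5::nat} = {0, 1, 2, 3, 4}"
  by auto

lemma tau_gen_explicit:
  fixes t :: "nat \<Rightarrow> 'a::comm_ring_1"
  shows "tau_gen t 0 = - (t 1 * t 2 * t 3) * (t 0 + t 1 + t 2 + t 3)"
    and "tau_gen t 1 = - (t 0 * t 2 * t 3) * (t 0 + t 1 + t 2 + t 3)"
    and "tau_gen t 2 = - (t 0 * t 1 * t 3) * (t 0 + t 1 + t 2 + t 3)"
    and "tau_gen t 3 = - (t 0 * t 1 * t 2) * (t 0 + t 1 + t 2 + t 3)"
    and "tau_gen t 4 = t 0 * t 1 * t 2 * t 3"
  by (simp_all add: tau_gen_def atLeastAtMost_0_3 insert_Diff_if mult_ac add_ac)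

lemma rr_explicit:
  fixes v :: "nat \<Rightarrow> 'a::comm_ring_1"
  shows "rr 0 v = v 1 * v 2 * v 3 * v 4" and "rr 1 v = v 0 * v 2 * v 3 * v 4"
    and "rr 2 v = v 0 * v 1 * v 3 * v 4" and "rr 3 v = v 0 * v 1 * v 2 * v 4"
  by (simp_all add: rr_def atLeastLessThan_0_5 insert_Diff_if mult_ac)

lemma card_2_subsets_of_5:
  "{S. S \<subseteq> {0..<5::nat} \<and> card S = 2} = (\<lambda>(a, b). {a, b}) ` {(a, b). a < b \<and> b < 5}"
proof (intro set_eqI iffI)
  fix S assume "S \<in> {S. S \<subseteq> {0..<5::nat} \<and> card S = 2}"
  then obtain a b where S: "S = {a, b}" "a \<noteq> b" "a < 5" "b < 5"
    by (auto simp: card_2_iff)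
  show "S \<in> (\<lambda>(a, b). {a, b}) ` {(a, b). a < b \<and> b < 5}"
  proof (cases "a < b")
    case True
    then show ?thesis using S by (auto intro!: image_eqI[of _ _ "(a, b)"])
  next
    case False
    then show ?thesis using S by (auto intro!: image_eqI[of _ _ "(b, a)"])
  qed
qed (auto simp: card_insert_if)

lemma esym2_explicit:
  "esym 2 v = v 0 * v 1 + v 0 * v 2 + v 0 * v 3 + v 0 * v 4 + v 1 * v 2 + v 1 * v 3 + v 1 * v 4
     + v 2 * v 3 + v 2 * v 4 + v 3 * v 4"
proof -
  have inj: "inj_on (\<lambda>(a::nat, b). {a, b}) {(a, b). a < b \<and> b < 5}"
    by (auto simp: inj_on_def doubleton_eq_iff)
  have pairs: "{(a, b). a < b \<and> b < (5::nat)}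
      = {(0,1), (0,2), (0,3), (0,4), (1,2), (1,3), (1,4), (2,3), (2,4), (3,4)}"
    by (auto simp: less_Suc_eq numeral_eq_Suc)
  show ?thesis
    unfolding esym_def card_2_subsets_of_5 by (subst sum.reindex[OF inj]) (simp add: pairs add_ac)
qed

lemma card_4_subsets_of_5:
  "{S. S \<subseteq> {0..<5::nat} \<and> card S = 4} = (\<lambda>i. {0..<5} - {i}) ` {0..<5}"
proof (intro set_eqI iffI)
  fix S assume "S \<in> {S. S \<subseteq> {0..<5::nat} \<and> card S = 4}"
  then have S: "S \<subseteq> {0..<5}" "card S = 4" by auto
  then have "card ({0..<5} - S) = 1"
    by (simp add: card_Diff_subset finite_subset)
  then obtain i where "{0..<5} - S = {i}"
    by (auto simp: card_1_singleton_iff)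
  then have "S = {0..<5} - {i}" "i \<in> {0..<5}" using S by auto
  then show "S \<in> (\<lambda>i. {0..<5} - {i}) ` {0..<5}" by blast
qed auto

lemma esym4_explicit:
  "esym 4 v = v 0 * v 1 * v 2 * v 3 + v 0 * v 1 * v 2 * v 4 + v 0 * v 1 * v 3 * v 4
     + v 0 * v 2 * v 3 * v 4 + v 1 * v 2 * v 3 * v 4"
proof -
  have inj: "inj_on (\<lambda>i::nat. {0..<5} - {i}) {0..<5}"
    by (auto simp: inj_on_def)
  show ?thesis
    unfolding esym_def card_4_subsets_of_5 sum.reindex[OF inj]
    by (simp add: atLeastLessThan_0_5 insert_Diff_if add_ac mult_ac)
qed

lemma esym4_tau_gen: "esym 4 (tau_gen t) = 0"
  unfolding esym4_explicit tau_gen_explicit by (simp add: algebra_simps)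

lemma esym2_tau_gen:
  fixes t :: "nat \<Rightarrow> 'a::comm_ring_1"
  assumes "(t 0 + t 1 + t 2 + t 3) * (t 0 * t 1 + t 0 * t 2 + t 0 * t 3 + t 1 * t 2 + t 1 * t 3 + t 2 * t 3)
    = t 0 * t 1 * t 2 + t 0 * t 1 * t 3 + t 0 * t 2 * t 3 + t 1 * t 2 * t 3"
  shows "esym 2 (tau_gen t) = 0"
proof -
  let ?s = "t 0 + t 1 + t 2 + t 3" and ?p = "t 0 * t 1 * t 2 * t 3"
  have "esym 2 (tau_gen t) = ?s * ?p *
      (?s * (t 0 * t 1 + t 0 * t 2 + t 0 * t 3 + t 1 * t 2 + t 1 * t 3 + t 2 * t 3)
        - (t 0 * t 1 * t 2 + t 0 * t 1 * t 3 + t 0 * t 2 * t 3 + t 1 * t 2 * t 3))"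
    unfolding esym2_explicit tau_gen_explicit by (simp add: algebra_simps)
  then show ?thesis using assms by simp
qed

lemma rr_tau_gen:
  fixes t :: "nat \<Rightarrow> 'a::comm_ring_1"
  defines "k \<equiv> (t 0 + t 1 + t 2 + t 3) ^ 3 * (t 0 * t 1 * t 2 * t 3) ^ 3"
  shows "rr 0 (tau_gen t) = - (k * t 0)" and "rr 1 (tau_gen t) = - (k * t 1)"
    and "rr 2 (tau_gen t) = - (k * t 2)" and "rr 3 (tau_gen t) = - (k * t 3)"
  unfolding k_def rr_explicit tau_gen_explicit by (simp_all add: power3_eq_cube mult_ac)

lemma rho_tau_gen:
  fixes t :: "nat \<Rightarrow> 'a::comm_ring_1"
  defines "k \<equiv> ((t 0 + t 1 + t 2 + t 3) * (t 0 * t 1 * t 2 * t 3)) ^ 6"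
  shows "rho0 (tau_gen t) = k * (- (t 1 + t 3) * (t 0 + t 1 + t 2))"
    and "rho1 (tau_gen t) = k * (t 0 * (t 0 + t 1 + t 2 + t 3))"
    and "rho2 (tau_gen t) = k * (t 0 * (t 0 + t 2))"
proof -
  have k: "k = ((t 0 + t 1 + t 2 + t 3) ^ 3 * (t 0 * t 1 * t 2 * t 3) ^ 3) ^ 2"
    by (simp add: k_def power_mult_distrib flip: power_mult)
  show "rho0 (tau_gen t) = k * (- (t 1 + t 3) * (t 0 + t 1 + t 2))"
    and "rho1 (tau_gen t) = k * (t 0 * (t 0 + t 1 + t 2 + t 3))"
    and "rho2 (tau_gen t) = k * (t 0 * (t 0 + t 2))"
    unfolding rho0_def rho1_def rho2_def rr_tau_gen k by (simp_all add: algebra_simps power2_eq_square)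
qed

lemma tau_gen_scale:
  fixes t :: "nat \<Rightarrow> 'a::comm_ring_1"
  shows "tau_gen (\<lambda>j. c * t j) i = c ^ 4 * tau_gen t i"
proof -
  have "card ({0..3::nat} - {i}) = 3" if "i < 4"
    using that by simp
  then show ?thesis
    by (simp add: tau_gen_def prod.distrib flip: sum_distrib_left)
      (simp add: algebra_simps eval_nat_numeral)
qed

section \<open>The parametrization tau\<close>

lemma tt_simps:
  "tt 0 x y z = t0 x y z" "tt 1 x y z = t1 x y z" "tt 2 x y z = t2 x y z" "tt 3 x y z = t3 x y z"
  by (simp_all add: tt_def)

definition t_sum :: "'a::comm_ring_1 \<Rightarrow> 'a \<Rightarrow> 'a \<Rightarrow> 'a" where
  "t_sum x y z = t0 x y z + t1 x y z + t2 x y z + t3 x y z"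

definition t_prod :: "'a::comm_ring_1 \<Rightarrow> 'a \<Rightarrow> 'a \<Rightarrow> 'a" where
  "t_prod x y z = t0 x y z * t1 x y z * t2 x y z * t3 x y z"

definition lambda_quintic :: "'a::comm_ring_1 \<Rightarrow> 'a \<Rightarrow> 'a \<Rightarrow> 'a" where
  "lambda_quintic x y z = z^5 - 2*y*z^4 + y^2*z^3 - x*z^4 + x*y*z^3 + x*y^2*z^2 - x*y^3*z
     - x^2*z^3 + x^2*y*z^2 + x^3*z^2 - x^3*y^2"

definition lambda_fun :: "'a::comm_ring_1 \<Rightarrow> 'a \<Rightarrow> 'a \<Rightarrow> 'a" where
  "lambda_fun x y z = (t_sum x y z * t_prod x y z) ^ 6 * lambda_quintic x y z"

lemma t_sigma1_sigma2_eq_sigma3: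
  fixes x y z :: "'a::comm_ring_1"
  shows "(t0 x y z + t1 x y z + t2 x y z + t3 x y z)
      * (t0 x y z * t1 x y z + t0 x y z * t2 x y z + t0 x y z * t3 x y z
         + t1 x y z * t2 x y z + t1 x y z * t3 x y z + t2 x y z * t3 x y z)
    = t0 x y z * t1 x y z * t2 x y z + t0 x y z * t1 x y z * t3 x y z
      + t0 x y z * t2 x y z * t3 x y z + t1 x y z * t2 x y z * t3 x y z"
  by (simp add: t0_def t1_def t2_def t3_def algebra_simps power2_eq_square power3_eq_cube)

lemma rho_forms_of_t:
  fixes x y z :: "'a::comm_ring_1"
  shows "- (t1 x y z + t3 x y z) * (t0 x y z + t1 x y z + t2 x y z) = x * lambda_quintic x y z"
    and "t0 x y z * (t0 x y z + t1 x y z + t2 x y z + t3 x y z) = y * lambda_quintic x y z"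
    and "t0 x y z * (t0 x y z + t2 x y z) = z * lambda_quintic x y z"
  by (simp_all add: t0_def t1_def t2_def t3_def lambda_quintic_def algebra_simps
      power2_eq_square power3_eq_cube eval_nat_numeral)

lemma rho_tau:
  fixes x y z :: "'a::comm_ring_1"
  shows "rho0 (tau x y z) = x * lambda_fun x y z"
    and "rho1 (tau x y z) = y * lambda_fun x y z"
    and "rho2 (tau x y z) = z * lambda_fun x y z"
  unfolding tau_eq_tau_gen rho_tau_gen tt_simps rho_forms_of_t
  by (simp_all add: lambda_fun_def t_sum_def t_prod_def)

lemma esym_tau:
  fixes x y z :: "'a::comm_ring_1"
  shows "esym 2 (tau x y z) = 0" and "esym 4 (tau x y z) = 0"
  unfolding tau_eq_tau_gen
  by (rule esym2_tau_gen, unfold tt_simps, rule t_sigma1_sigma2_eq_sigma3) (rule esym4_tau_gen)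

lemma t_scale:
  fixes x y z c :: "'a::comm_ring_1"
  shows "t0 (c*x) (c*y) (c*z) = c^3 * t0 x y z" and "t1 (c*x) (c*y) (c*z) = c^3 * t1 x y z"
    and "t2 (c*x) (c*y) (c*z) = c^3 * t2 x y z" and "t3 (c*x) (c*y) (c*z) = c^3 * t3 x y z"
  by (simp_all add: t0_def t1_def t2_def t3_def algebra_simps power2_eq_square power3_eq_cube)

lemma tau_scale:
  fixes x y z c :: "'a::comm_ring_1"
  shows "tau (c*x) (c*y) (c*z) i = c^12 * tau x y z i"
proof -
  have "(\<lambda>j. tt j (c*x) (c*y) (c*z)) = (\<lambda>j. c^3 * tt j x y z)"
    by (simp add: fun_eq_iff tt_def t_scale)
  then show ?thesis
    by (simp add: tau_eq_tau_gen tau_gen_scale flip: power_mult)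
qed

lemma lambda_fun_scale:
  fixes x y z c :: "'a::comm_ring_1"
  shows "lambda_fun (c*x) (c*y) (c*z) = c^95 * lambda_fun x y z"
proof -
  have "t_sum (c*x) (c*y) (c*z) = c^3 * t_sum x y z"
    by (simp add: t_sum_def t_scale algebra_simps)
  moreover have "t_prod (c*x) (c*y) (c*z) = c^12 * t_prod x y z"
    by (simp add: t_prod_def t_scale mult_ac flip: power_add)
  moreover have "lambda_quintic (c*x) (c*y) (c*z) = c^5 * lambda_quintic x y z"
    by (simp add: lambda_quintic_def algebra_simps power_mult_distrib eval_nat_numeral)
  ultimately have "lambda_fun (c*x) (c*y) (c*z) = ((c^3)^6 * (c^12)^6 * c^5) * lambda_fun x y z"
    by (simp add: lambda_fun_def power_mult_distrib mult_ac)
  then show ?thesis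
    by (simp flip: power_mult power_add)
qed

section \<open>Evaluation of integer polynomials\<close>

definition eval_monomial :: "(nat \<Rightarrow>\<^sub>0 nat) \<Rightarrow> 'a::comm_ring_1 \<times> 'a \<times> 'a \<Rightarrow> 'a" where
  "eval_monomial m P = (case P of (x, y, z) \<Rightarrow>
     x ^ Poly_Mapping.lookup m 0 * y ^ Poly_Mapping.lookup m 1 * z ^ Poly_Mapping.lookup m 2)"

lemma eval_monomial_add: "eval_monomial (a + b) P = eval_monomial a P * eval_monomial b P"
  by (cases P) (simp add: eval_monomial_def lookup_add power_add mult_ac)

lemma peval_eq_sum:
  assumes "finite K" "Poly_Mapping.keys p \<subseteq> K"
  shows "peval p P = (\<Sum>m\<in>K. of_int (Poly_Mapping.lookup p m) * eval_monomial m P)"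
proof -
  have "peval p P = (\<Sum>m\<in>Poly_Mapping.keys p. of_int (Poly_Mapping.lookup p m) * eval_monomial m P)"
    by (cases P) (simp add: peval_def eval_monomial_def mult.assoc)
  also have "\<dots> = (\<Sum>m\<in>K. of_int (Poly_Mapping.lookup p m) * eval_monomial m P)"
    using assms by (intro sum.mono_neutral_left) (auto simp: in_keys_iff)
  finally show ?thesis .
qed

lemma peval_zero: "peval 0 P = 0"
  by (simp add: peval_eq_sum[of "{}"])

lemma peval_single: "peval (Poly_Mapping.single m c) P = of_int c * eval_monomial m P"
  by (simp add: peval_eq_sum[of "{m}"])

lemma peval_add: "peval (p + q) P = peval p P + peval q P"
  using keys_add[of p q]
  by (simp add: peval_eq_sum[of "Poly_Mapping.keys p \<union> Poly_Mapping.keys q"] lookup_add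
      sum.distrib distrib_right)

lemma peval_diff: "peval (p - q) P = peval p P - peval q P"
  using keys_diff[of p q]
  by (simp add: peval_eq_sum[of "Poly_Mapping.keys p \<union> Poly_Mapping.keys q"] lookup_minus
      sum_subtractf left_diff_distrib)

lemma peval_mult: "peval (p * q) P = peval p P * peval q P"
proof (induction p rule: frag_induction[OF subset_UNIV])
  case 1
  show ?case by (simp add: peval_zero)
next
  case (2 m)
  show ?case
  proof (induction q rule: frag_induction[OF subset_UNIV])
    case (2 n)
    show ?case by (simp add: mult_single peval_single eval_monomial_add)
  qed (simp_all add: peval_zero peval_diff right_diff_distrib)
next
  case (3 a b)
  then show ?case by (simp add: peval_diff left_diff_distrib)
qed

lemma peval_one: "peval 1 P = 1"
  by (simp add: peval_single eval_monomial_def split: prod.split flip: single_one)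

lemma peval_power: "peval (p ^ n) P = peval p P ^ n"
  by (induction n) (simp_all add: peval_one peval_mult)

lemma peval_numeral: "peval (numeral n) P = numeral n"
  by (simp add: peval_single eval_monomial_def split: prod.split flip: single_numeral)

lemma peval_Var: "peval (Var 0) (x, y, z) = x" "peval (Var 1) (x, y, z) = y" "peval (Var 2) (x, y, z) = z"
  by (simp_all add: Var_def peval_single eval_monomial_def lookup_single)

lemma lambda_poly_eq: "lambda_poly = lambda_fun (Var 0) (Var 1) (Var 2)"
  unfolding lambda_poly_def
proof (rule the_equality)
  show "Var 0 * lambda_fun (Var 0) (Var 1) (Var 2) = rho0 (tau (Var 0) (Var 1) (Var 2))"
    by (simp add: rho_tau)
  fix q assume "Var 0 * q = rho0 (tau (Var 0) (Var 1) (Var 2))"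
  moreover have "Var 0 \<noteq> 0"
    by (simp add: Var_def)
  ultimately show "q = lambda_fun (Var 0) (Var 1) (Var 2)"
    by (simp add: rho_tau)
qed

lemma peval_lambda_poly: "peval lambda_poly (x, y, z) = lambda_fun x y z"
  unfolding lambda_poly_eq lambda_fun_def t_sum_def t_prod_def lambda_quintic_def
    t0_def t1_def t2_def t3_def
  by (simp only: peval_mult peval_add peval_diff peval_power peval_numeral peval_Var)

section \<open>Homogeneity and projective points\<close>

lemma rr_scale:
  fixes v w :: "nat \<Rightarrow> 'a::comm_ring_1"
  assumes "i < 5" and "\<forall>j<5. w j = c * v j"
  shows "rr i w = c^4 * rr i v"
proof -
  have "rr i w = (\<Prod>j\<in>{0..<5} - {i}. c * v j)"
    unfolding rr_def using assms(2) by (intro prod.cong) auto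
  also have "\<dots> = c ^ card ({0..<5::nat} - {i}) * rr i v"
    by (simp add: rr_def prod.distrib)
  finally show ?thesis
    using assms(1) by simp
qed

lemma rho_scale:
  fixes v w :: "nat \<Rightarrow> 'a::comm_ring_1"
  assumes "\<forall>j<5. w j = c * v j"
  shows "rho0 w = c^8 * rho0 v" and "rho1 w = c^8 * rho1 v" and "rho2 w = c^8 * rho2 v"
  by (simp_all add: rho0_def rho1_def rho2_def rr_scale[OF _ assms] algebra_simps flip: power_add)

lemma esym_scale:
  fixes v w :: "nat \<Rightarrow> 'a::comm_ring_1"
  assumes "\<forall>j<5. w j = c * v j"
  shows "esym k w = c^k * esym k v"
  unfolding esym_def sum_distrib_left
proof (intro sum.cong refl)
  fix S :: "nat set" assume "S \<in> {S. S \<subseteq> {0..<5} \<and> card S = k}"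
  then have "(\<Prod>i\<in>S. w i) = (\<Prod>i\<in>S. c * v i)" and "card S = k"
    using assms by (auto intro!: prod.cong)
  then show "(\<Prod>i\<in>S. w i) = c^k * (\<Prod>i\<in>S. v i)"
    by (simp add: prod.distrib)
qed

lemma Mbar_scale:
  assumes "w \<in> Mbar" and "c \<noteq> 0" and "\<forall>i<5. v i = c * w i"
  shows "v \<in> Mbar"
  using assms esym_scale[OF assms(3)] by (auto simp: Mbar_def)

lemma U_tau_iff: "(x, y, z) \<in> U_tau \<longleftrightarrow> (x, y, z) \<noteq> (0, 0, 0) \<and> lambda_fun x y z \<noteq> 0"
  by (auto simp: U_tau_def C_tau_def P2_def peval_lambda_poly)

lemma rho_pt_scaled_tau:
  fixes x y z :: "'a::field"
  assumes "\<forall>i<5. v i = c * tau x y z i"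
  shows "rho_pt v = (c^8 * lambda_fun x y z * x, c^8 * lambda_fun x y z * y, c^8 * lambda_fun x y z * z)"
  using rho_scale[OF assms] by (simp add: rho_pt_def rho_tau mult_ac)

lemma tau_nonzero:
  fixes x y z :: "'a::field"
  assumes "(x, y, z) \<in> U_tau"
  shows "\<exists>i<5. tau x y z i \<noteq> 0"
proof (rule ccontr)
  assume "\<not> ?thesis"
  \<comment> \<open>then tau x y z is 0 times itself, and rho is homogeneous of positive degree\<close>
  then have "rho_pt (tau x y z) = (0, 0, 0)"
    using rho_pt_scaled_tau[of "tau x y z" 0] by simp
  then show False
    using assms by (simp add: rho_pt_def rho_tau U_tau_iff)
qed

lemma U_rho_E:
  assumes "v \<in> U_rho"
  obtains x y z c where "(x, y, z) \<in> U_tau" and "c \<noteq> 0" and "\<forall>i<5. v i = c * tau x y z i"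
  using assms by (auto simp: U_rho_def proj4_eq_def tau_pt_def)

lemma U_tau_subset_dom_tau: "U_tau \<subseteq> P2 - T_tau"
  using tau_nonzero by (fastforce simp: U_tau_def T_tau_def tau_pt_def)

lemma tau_pt_in_Mbar:
  assumes "p \<in> U_tau"
  shows "tau_pt p \<in> Mbar"
  using assms tau_nonzero esym_tau by (cases p) (auto simp: Mbar_def tau_pt_def)

lemma tau_pt_proj_inj:
  fixes p q :: "'a::field \<times> 'a \<times> 'a"
  assumes "p \<in> U_tau" and "q \<in> U_tau" and "proj4_eq (tau_pt p) (tau_pt q)"
  shows "proj2_eq p q"
proof -
  obtain x y z x' y' z' where pq: "p = (x, y, z)" "q = (x', y', z')"
    by (cases p, cases q)
  obtain c where "c \<noteq> 0" and c: "\<forall>i<5. tau x' y' z' i = c * tau x y z i"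
    using assms(3) by (auto simp: proj4_eq_def pq tau_pt_def)
  have "(x, y, z) \<noteq> (0, 0, 0)" "lambda_fun x y z \<noteq> 0" "lambda_fun x' y' z' \<noteq> 0"
    using assms(1,2) by (auto simp: pq U_tau_iff)
  moreover have "(x' * lambda_fun x' y' z', y' * lambda_fun x' y' z', z' * lambda_fun x' y' z')
      = (c^8 * lambda_fun x y z * x, c^8 * lambda_fun x y z * y, c^8 * lambda_fun x y z * z)"
    using rho_pt_scaled_tau[OF c] by (simp add: rho_pt_def rho_tau)
  ultimately show ?thesis
    using \<open>c \<noteq> 0\<close> unfolding pq proj2_eq_def
    by (auto intro!: exI[of _ "c^8 * lambda_fun x y z / lambda_fun x' y' z'"] simp: field_simps)
qed

lemma U_rho_subset_dom_rho: "U_rho \<subseteq> Mbar - T_rho"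
proof
  fix v assume "v \<in> U_rho"
  then obtain x y z c where xyz: "(x, y, z) \<in> U_tau" and "c \<noteq> 0"
    and c: "\<forall>i<5. v i = c * tau x y z i"
    by (rule U_rho_E)
  have "v \<in> Mbar"
    using Mbar_scale[OF tau_pt_in_Mbar[OF xyz] \<open>c \<noteq> 0\<close>] c by (simp add: tau_pt_def)
  moreover have "rho_pt v \<noteq> (0, 0, 0)"
    using xyz \<open>c \<noteq> 0\<close> by (simp add: rho_pt_scaled_tau[OF c] U_tau_iff)
  ultimately show "v \<in> Mbar - T_rho"
    by (simp add: T_rho_def rho_pt_def)
qed

lemma rho_pt_in_U_tau_and_tau_pt_inverse:
  assumes "v \<in> U_rho"
  shows "rho_pt v \<in> U_tau \<and> proj4_eq (tau_pt (rho_pt v)) v"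
proof -
  obtain x y z c where xyz: "(x, y, z) \<in> U_tau" and "c \<noteq> 0"
    and c: "\<forall>i<5. v i = c * tau x y z i"
    using assms by (rule U_rho_E)
  define d where "d = c^8 * lambda_fun x y z"
  have "d \<noteq> 0"
    using xyz \<open>c \<noteq> 0\<close> by (simp add: d_def U_tau_iff)
  have rho_v: "rho_pt v = (d * x, d * y, d * z)"
    using rho_pt_scaled_tau[OF c] by (simp add: d_def)
  have "rho_pt v \<in> U_tau"
    using xyz \<open>d \<noteq> 0\<close> by (simp add: rho_v U_tau_iff lambda_fun_scale)
  moreover have "proj4_eq (tau_pt (rho_pt v)) v"
    unfolding proj4_eq_def
  proof
    show "\<exists>i<5. tau_pt (rho_pt v) i \<noteq> 0"
      using tau_nonzero[OF xyz] \<open>d \<noteq> 0\<close> by (simp add: rho_v tau_pt_def tau_scale)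
    show "\<exists>e. e \<noteq> 0 \<and> (\<forall>i<5. v i = e * tau_pt (rho_pt v) i)"
      using c \<open>c \<noteq> 0\<close> \<open>d \<noteq> 0\<close>
      by (intro exI[of _ "c / d^12"]) (simp add: rho_v tau_pt_def tau_scale)
  qed
  ultimately show ?thesis ..
qed

lemma rho_pt_tau_pt:
  assumes "p \<in> U_tau"
  shows "proj2_eq (rho_pt (tau_pt p)) p"
proof (cases p)
  case (fields x y z)
  then have "(x, y, z) \<noteq> (0, 0, 0)" and "lambda_fun x y z \<noteq> 0"
    using assms by (auto simp: U_tau_iff)
  then show ?thesis
    by (auto simp: fields rho_pt_def tau_pt_def rho_tau proj2_eq_def
        intro!: exI[of _ "1 / lambda_fun x y z"])
qed

theorem lemma8p5:
  shows "(U_tau :: ('a::field_char_0 \<times> 'a \<times> 'a) set) \<subseteq> P2 - T_tau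
    \<and> (\<forall>p\<in>(U_tau :: ('a \<times> 'a \<times> 'a) set). tau_pt p \<in> Mbar)
    \<and> (\<forall>p\<in>(U_tau :: ('a \<times> 'a \<times> 'a) set). \<forall>q\<in>U_tau.
          proj4_eq (tau_pt p) (tau_pt q) \<longrightarrow> proj2_eq p q)
    \<and> (U_rho :: (nat \<Rightarrow> 'a) set) \<subseteq> Mbar - T_rho
    \<and> (\<forall>v\<in>(U_rho :: (nat \<Rightarrow> 'a) set). rho_pt v \<in> U_tau \<and> proj4_eq (tau_pt (rho_pt v)) v)
    \<and> (\<forall>p\<in>(U_tau :: ('a \<times> 'a \<times> 'a) set). proj2_eq (rho_pt (tau_pt p)) p)"
  by (simp add: U_tau_subset_dom_tau tau_pt_in_Mbar tau_pt_proj_inj U_rho_subset_dom_rho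
      rho_pt_in_U_tau_and_tau_pt_inverse rho_pt_tau_pt)

end
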